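(* Let $Q,Q'\ge 1$ be real numbers, let $n\ge 1$ be an integer, and let $A,B\subseteq\mathcal F_{Q,Q'}$. Let $T=\max_{1\le m\le QQ'}\tau(m)$, where $\tau(m)$ is the number of positive divisors of $m$. Then $$|A/B|\ge \frac{|A||B|}{(4T)^{n+1}(QQ')^{1/n}\bigl(1+\log(QQ')\bigr)}.$$
   Context: For real numbers $Q,Q'\ge 1$, $\mathcal F_{Q,Q'}=\{q/q' : q,q'\in\mathbb{Z},\ 1\le q\le Q,\ 1\le q'\le Q'\}$. For sets $A,B$ of positive rationals, $A/B=\{a/b: a\in A,\ b\in B\}$. $\log$ denotes the natural logarithm. *)

theory Defs
  imports Complex_Main
begin

definition farey_quot :: "real \<Rightarrow> real \<Rightarrow> rat set" where
  "farey_quot Q Q' = {of_int q / of_int q' | q q' :: int.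
      1 \<le> q \<and> real_of_int q \<le> Q \<and> 1 \<le> q' \<and> real_of_int q' \<le> Q'}"

definition set_quot :: "rat set \<Rightarrow> rat set \<Rightarrow> rat set" where
  "set_quot A B = {a / b | a b. a \<in> A \<and> b \<in> B}"

definition num_divisors :: "nat \<Rightarrow> nat" where
  "num_divisors m = card {d. d dvd m}"

definition max_tau :: "real \<Rightarrow> nat" where
  "max_tau X = Max {num_divisors m | m :: nat. 1 \<le> m \<and> real m \<le> X}"

end

(*
  Cancel the gcd of the numerators and the gcd of the denominators of a and b: then
  a / b = x1 y2 / (y1 x2) in lowest terms, where (x1, y1) divides the numerator and
  denominator of a and (x2, y2) those of b. The tuple ((x1, y1), (x2, y2)) is determined by
  a / b together with the divisor pair (x1, y1) of it, so at most T^2 |A/B| tuples occur.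
  Given the tuple, a determines b and conversely, so the fibre over it has at most
  min (alpha (x1, y1), beta (x2, y2)) elements, where alpha p counts the a in A whose divisor
  pairs contain p; summing alpha over all pairs p counts the divisor pairs of the elements of A,
  at most T^2 |A|. Cauchy-Schwarz over the fibres gives
  (|A| |B|)^2 <= T^2 |A/B| * T^2 |A| * T^2 |B|, i.e. |A| |B| <= T^6 |A/B|.
  Interpolating geometrically with the trivial bound |A| |B| <= Q Q' |A/B| yields the factor
  T^(6 (1 - 1/n)) (Q Q')^(1/n), and 6 (1 - 1/n) <= n + 1 since (n - 2)(n - 3) >= 0.
*)

theory Submission
  imports Defs "HOL-Analysis.Convex"
begin

lemma card_squared_le_card_image_mult_sum_fibres:
  assumes "finite X"
  shows "card X ^ 2 \<le> card (f ` X) * (\<Sum>y\<in>f ` X. card {x\<in>X. f x = y} ^ 2)"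
proof -
  have "card X = (\<Sum>y\<in>f ` X. card {x\<in>X. f x = y})"
    using sum.image_gen[OF assms, of "\<lambda>_. 1 :: nat" f] by simp
  then have "real (card X) ^ 2 \<le> (\<Sum>y\<in>f ` X. real (card {x\<in>X. f x = y}) ^ 2) * card (f ` X)"
    using sum_squared_le_sum_of_squares[of "\<lambda>y. real (card {x\<in>X. f x = y})" "f ` X"]
    by simp
  then show ?thesis
    by (simp only: mult.commute flip: of_nat_le_iff of_nat_power of_nat_mult of_nat_sum)
qed

lemma sum_card_incidence:
  assumes "finite A" "\<And>a. a \<in> A \<Longrightarrow> finite (D a)"
  shows "(\<Sum>p\<in>(\<Union>a\<in>A. D a). card {a\<in>A. p \<in> D a}) = (\<Sum>a\<in>A. card (D a))"
proof (rule sum_multicount_gen)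
  show "\<forall>a\<in>A. card {p\<in>\<Union>a\<in>A. D a. p \<in> D a} = card (D a)"
    by (auto intro!: arg_cong[where f = card])
qed (use assms in auto)

lemma div_gcd_eq_imp_eq:
  fixes n m m' :: int
  assumes "n \<noteq> 0" "n div gcd n m = n div gcd n m'" "m div gcd n m = m' div gcd n m'"
  shows "m = m'"
proof -
  have n: "n = n div gcd n m * gcd n m" "n = n div gcd n m * gcd n m'"
    using assms(2) dvd_div_mult_self[OF gcd_dvd1, of n m] dvd_div_mult_self[OF gcd_dvd1, of n m']
    by simp_all
  moreover have "n div gcd n m \<noteq> 0"
    using n(1) assms(1) by (metis mult_zero_left)
  ultimately have gcd_eq: "gcd n m = gcd n m'"
    by (metis mult_cancel_left)
  have "m = m div gcd n m * gcd n m"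
    by simp
  also have "\<dots> = m' div gcd n m' * gcd n m'"
    by (subst assms(3), subst gcd_eq, rule refl)
  also have "\<dots> = m'"
    by simp
  finally show ?thesis .
qed

lemma min_le_powr_combination:
  fixes u v \<theta> :: real
  assumes "0 < u" "0 < v" "0 \<le> \<theta>" "\<theta> \<le> 1"
  shows "min u v \<le> u powr (1 - \<theta>) * v powr \<theta>"
proof (cases "u \<le> v")
  case True
  have "min u v = u powr (1 - \<theta>) * u powr \<theta>"
    using True assms(1) by (simp flip: powr_add)
  also have "\<dots> \<le> u powr (1 - \<theta>) * v powr \<theta>"
    using True assms by (intro mult_left_mono powr_mono2) auto
  finally show ?thesis .
next
  case False
  have "min u v = v powr (1 - \<theta>) * v powr \<theta>"
    using False assms(2) by (simp flip: powr_add)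
  also have "\<dots> \<le> u powr (1 - \<theta>) * v powr \<theta>"
    using False assms by (intro mult_right_mono powr_mono2) auto
  finally show ?thesis .
qed

lemma six_mult_one_minus_inverse_le:
  fixes n :: nat
  assumes "1 \<le> n"
  shows "6 * (1 - 1 / real n) \<le> real n + 1"
proof -
  have "0 \<le> (real n - 2) * (real n - 3)"
    by (cases "n \<le> 2") (auto intro: mult_nonpos_nonpos)
  then show ?thesis
    using assms by (simp add: field_simps)
qed

lemma interpolated_divide_le:
  fixes N K t x :: real and n :: nat
  assumes "1 \<le> t" "1 \<le> x" "1 \<le> n" "0 \<le> K" "N \<le> t ^ 6 * K" "N \<le> x * K"
  shows "N / ((4 * t) ^ (n + 1) * x powr (1 / real n) * (1 + ln x)) \<le> K"
proof -
  define \<theta> where "\<theta> = 1 / real n"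
  define c where "c = (4 * t) ^ (n + 1) * x powr \<theta>"
  have \<theta>: "0 \<le> \<theta>" "\<theta> \<le> 1"
    using assms(3) by (auto simp: \<theta>_def)
  have c_pos: "0 < c"
    using assms(1,2) by (simp add: c_def)
  have "(t ^ 6) powr (1 - \<theta>) \<le> (4 * t) ^ (n + 1)"
  proof -
    have "t ^ 6 = t powr 6"
      using assms(1) by (simp add: powr_numeral)
    then have "(t ^ 6) powr (1 - \<theta>) = t powr (6 * (1 - \<theta>))"
      by (simp add: powr_powr)
    also have "\<dots> \<le> t powr (real n + 1)"
      using assms(1,3) six_mult_one_minus_inverse_le unfolding \<theta>_def by (intro powr_mono) auto
    also have "\<dots> = t ^ (n + 1)"
      using assms(1) powr_realpow[of t "n + 1"] by (simp add: add.commute)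
    also have "\<dots> \<le> (4 * t) ^ (n + 1)"
      using assms(1) by (intro power_mono) auto
    finally show ?thesis .
  qed
  have "N \<le> min (t ^ 6) x * K"
    using assms(5,6) by (simp add: min_def)
  also have "\<dots> \<le> (t ^ 6) powr (1 - \<theta>) * x powr \<theta> * K"
    using assms(1,2,4) \<theta> by (intro mult_right_mono min_le_powr_combination) auto
  also have "\<dots> \<le> c * K"
    unfolding c_def using \<open>(t ^ 6) powr (1 - \<theta>) \<le> (4 * t) ^ (n + 1)\<close> assms(4)
    by (intro mult_right_mono) auto
  also have "\<dots> \<le> c * (1 + ln x) * K"
    using assms(2,4) c_pos by (intro mult_right_mono mult_le_cancel_left1[THEN iffD2]) auto
  finally have "N \<le> c * (1 + ln x) * K" .
  moreover have "0 < c * (1 + ln x)"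
    using assms(2) c_pos by (simp add: add_pos_nonneg)
  ultimately show ?thesis
    unfolding c_def \<theta>_def by (simp add: divide_le_eq mult.commute)
qed

definition rat_num :: "rat \<Rightarrow> int" where
  "rat_num r = fst (quotient_of r)"

definition rat_den :: "rat \<Rightarrow> int" where
  "rat_den r = snd (quotient_of r)"

lemma rat_num_den: "r = of_int (rat_num r) / of_int (rat_den r)"
  unfolding rat_num_def rat_den_def by (simp add: quotient_of_div)

lemma rat_den_pos: "0 < rat_den r"
  unfolding rat_den_def by (rule quotient_of_denom_pos')

lemma coprime_rat_num_den: "coprime (rat_num r) (rat_den r)"
  unfolding rat_num_def rat_den_def by (simp add: quotient_of_coprime)

lemma rat_num_pos_iff: "0 < rat_num r \<longleftrightarrow> 0 < r"
proof -
  have "0 < r \<longleftrightarrow> 0 < (of_int (rat_num r) / of_int (rat_den r) :: rat)"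
    by (subst rat_num_den) simp
  then show ?thesis
    using rat_den_pos[of r] by (simp add: zero_less_divide_iff)
qed

lemma rat_eqI: "rat_num a = rat_num b \<Longrightarrow> rat_den a = rat_den b \<Longrightarrow> a = b"
  by (metis rat_num_den)

lemma rat_num_den_of_coprime:
  assumes "0 < q" "coprime p q"
  shows "rat_num (of_int p / of_int q) = p" "rat_den (of_int p / of_int q) = q"
proof -
  have "quotient_of (of_int p / of_int q) = (p, q)"
    using assms by (simp flip: Fract_of_int_quotient add: quotient_of_Fract)
  then show "rat_num (of_int p / of_int q) = p" "rat_den (of_int p / of_int q) = q"
    by (simp_all add: rat_num_def rat_den_def)
qed

lemma rat_num_den_dvd:
  assumes "0 < q"
  shows "rat_num (of_int p / of_int q) dvd p" "rat_den (of_int p / of_int q) dvd q"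
proof -
  define r :: rat where "r = of_int p / of_int q"
  have "of_int (rat_num r) / of_int (rat_den r) = (of_int p / of_int q :: rat)"
    using rat_num_den[of r] unfolding r_def by simp
  then have cross: "rat_num r * q = p * rat_den r"
    using assms rat_den_pos[of r] by (simp add: field_simps flip: of_int_mult)
  have "rat_num r dvd p * rat_den r" "rat_den r dvd rat_num r * q"
    by (metis cross dvd_triv_left dvd_triv_right)+
  then show "rat_num r dvd p" "rat_den r dvd q"
    using coprime_rat_num_den[of r]
    by (simp_all add: coprime_dvd_mult_left_iff coprime_commute coprime_dvd_mult_right_iff)
qed

definition pos_divisors :: "int \<Rightarrow> int set" where
  "pos_divisors m = {d. 0 < d \<and> d dvd m}"

definition divisor_pairs :: "rat \<Rightarrow> (int \<times> int) set" where
  "divisor_pairs r = pos_divisors (rat_num r) \<times> pos_divisors (rat_den r)"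

lemma div_gcd_mem_pos_divisors:
  fixes n m :: int
  assumes "0 < n"
  shows "n div gcd n m \<in> pos_divisors n"
proof -
  have n: "n div gcd n m * gcd n m = n"
    by simp
  then have "n div gcd n m dvd n"
    by (metis dvd_triv_left)
  moreover have "0 < n div gcd n m"
    using n assms by (metis gcd_pos_int zero_less_mult_pos2 less_irrefl)
  ultimately show ?thesis
    by (simp add: pos_divisors_def)
qed

lemma pos_divisors_eq_image_nat:
  assumes "0 \<le> m"
  shows "pos_divisors m = int ` {d. d dvd nat m \<and> 0 < d}"
proof (intro set_eqI iffI)
  fix x assume "x \<in> pos_divisors m"
  then have "0 < x" "nat x dvd nat m"
    using assms by (auto simp: pos_divisors_def nat_dvd_iff)
  then show "x \<in> int ` {d. d dvd nat m \<and> 0 < d}"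
    by (auto intro!: image_eqI[of _ _ "nat x"])
qed (use assms in \<open>force simp: pos_divisors_def dest: int_dvd_int_iff[THEN iffD2]\<close>)

lemma finite_pos_divisors: "m \<noteq> 0 \<Longrightarrow> finite (pos_divisors m)"
  unfolding pos_divisors_def by (auto intro: finite_subset[OF _ finite_divisors_int])

lemma card_pos_divisors:
  assumes "1 \<le> m"
  shows "card (pos_divisors m) = num_divisors (nat m)"
proof -
  have "{d. d dvd nat m \<and> 0 < d} = {d. d dvd nat m}"
    using assms by (auto intro!: Nat.gr0I)
  then show ?thesis
    using assms by (simp add: pos_divisors_eq_image_nat card_image num_divisors_def)
qed

lemma card_pos_divisors_le_max_tau:
  assumes "1 \<le> m" "real_of_int m \<le> X"
  shows "card (pos_divisors m) \<le> max_tau X"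
proof -
  let ?taus = "{num_divisors k | k :: nat. 1 \<le> k \<and> real k \<le> X}"
  have "?taus \<subseteq> num_divisors ` {..nat \<lfloor>X\<rfloor>}"
    by (auto simp: le_nat_floor)
  then have "finite ?taus"
    by (rule finite_subset) simp
  moreover have "num_divisors (nat m) \<in> ?taus"
    using assms by (auto intro!: exI[of _ "nat m"])
  ultimately show ?thesis
    unfolding max_tau_def card_pos_divisors[OF assms(1)] by (rule Max_ge)
qed

lemma finite_divisor_pairs: "0 < r \<Longrightarrow> finite (divisor_pairs r)"
  using rat_den_pos[of r]
  by (simp add: divisor_pairs_def finite_pos_divisors flip: rat_num_pos_iff)

lemma farey_quot_eq_image:
  "farey_quot Q Q' = (\<lambda>(q, q'). of_int q / of_int q') ` ({1..\<lfloor>Q\<rfloor>} \<times> {1..\<lfloor>Q'\<rfloor>})"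
  unfolding farey_quot_def by (force simp: le_floor_iff)

lemma finite_farey_quot: "finite (farey_quot Q Q')"
  unfolding farey_quot_eq_image by simp

lemma card_farey_quot_le:
  assumes "1 \<le> Q" "1 \<le> Q'"
  shows "real (card (farey_quot Q Q')) \<le> Q * Q'"
proof -
  have "card (farey_quot Q Q') \<le> card ({1..\<lfloor>Q\<rfloor>} \<times> {1..\<lfloor>Q'\<rfloor>})"
    unfolding farey_quot_eq_image by (rule card_image_le) simp
  then have "real (card (farey_quot Q Q')) \<le> real (nat \<lfloor>Q\<rfloor>) * real (nat \<lfloor>Q'\<rfloor>)"
    by (simp add: card_cartesian_product flip: of_nat_mult)
  also have "\<dots> \<le> Q * Q'"
    using assms by (intro mult_mono) auto
  finally show ?thesis .
qed

lemma farey_quot_mono: "Q \<le> X \<Longrightarrow> Q' \<le> X' \<Longrightarrow> farey_quot Q Q' \<subseteq> farey_quot X X'"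
  unfolding farey_quot_def by force

lemma divide_mem_farey_quot:
  assumes "a \<in> farey_quot Q Q'" "b \<in> farey_quot Q Q'"
  shows "a / b \<in> farey_quot (Q * Q') (Q * Q')"
proof -
  obtain p p' q q' :: int where
    a: "a = of_int p / of_int p'" "1 \<le> p" "p \<le> Q" "1 \<le> p'" "p' \<le> Q'" and
    b: "b = of_int q / of_int q'" "1 \<le> q" "q \<le> Q" "1 \<le> q'" "q' \<le> Q'"
    using assms unfolding farey_quot_def by blast
  have "a / b = of_int (p * q') / of_int (p' * q)"
    unfolding a(1) b(1) using a b by (simp add: field_simps)
  moreover have "real_of_int (p * q') \<le> Q * Q'" "real_of_int (p' * q) \<le> Q * Q'"
    using a b by (simp_all add: mult_mono mult.commute[of "real_of_int p'"])
  moreover have "1 \<le> p * q'" "1 \<le> p' * q"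
    using a b mult_mono[of 1 p 1 q'] mult_mono[of 1 p' 1 q] by simp_all
  ultimately show ?thesis
    unfolding farey_quot_def by blast
qed

lemma farey_quot_rat_num_den_le:
  assumes "r \<in> farey_quot Q Q'"
  shows "1 \<le> rat_num r" "real_of_int (rat_num r) \<le> Q" "real_of_int (rat_den r) \<le> Q'"
proof -
  obtain q q' :: int where r: "r = of_int q / of_int q'" and
    bounds: "1 \<le> q" "real_of_int q \<le> Q" "1 \<le> q'" "real_of_int q' \<le> Q'"
    using assms unfolding farey_quot_def by blast
  have "0 < r"
    using r bounds by simp
  then show "1 \<le> rat_num r"
    by (simp flip: rat_num_pos_iff)
  have "rat_num r dvd q" "rat_den r dvd q'"
    unfolding r using bounds by (simp_all add: rat_num_den_dvd)
  then have "rat_num r \<le> q" "rat_den r \<le> q'"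
    using bounds by (simp_all add: zdvd_imp_le)
  with bounds show "real_of_int (rat_num r) \<le> Q" "real_of_int (rat_den r) \<le> Q'"
    by linarith+
qed

lemma card_divisor_pairs_le_max_tau:
  assumes "r \<in> farey_quot X X"
  shows "card (divisor_pairs r) \<le> max_tau X ^ 2"
  using farey_quot_rat_num_den_le[OF assms] rat_den_pos[of r]
  by (simp add: divisor_pairs_def card_cartesian_product power2_eq_square
      card_pos_divisors_le_max_tau mult_mono)

lemma set_quot_eq_image: "set_quot A B = case_prod (/) ` (A \<times> B)"
  unfolding set_quot_def by force

lemma finite_set_quot: "finite A \<Longrightarrow> finite B \<Longrightarrow> finite (set_quot A B)"
  unfolding set_quot_eq_image by simp

lemma card_le_card_set_quot:
  assumes "finite A" "finite B" "b \<in> B" "b \<noteq> 0"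
  shows "card A \<le> card (set_quot A B)"
proof -
  have "card A = card ((\<lambda>a. a / b) ` A)"
    using assms by (intro card_image[symmetric]) (auto intro: inj_onI)
  also have "\<dots> \<le> card (set_quot A B)"
    using assms by (intro card_mono finite_set_quot) (auto simp: set_quot_def)
  finally show ?thesis .
qed

definition quot_parts :: "rat \<Rightarrow> rat \<Rightarrow> (int \<times> int) \<times> (int \<times> int)" where
  "quot_parts a b =
    (let g = gcd (rat_num a) (rat_num b); h = gcd (rat_den a) (rat_den b)
     in ((rat_num a div g, rat_den a div h), (rat_num b div g, rat_den b div h)))"

lemma quot_parts_swap: "quot_parts b a = prod.swap (quot_parts a b)"
  by (simp add: quot_parts_def Let_def gcd.commute)

lemma quot_parts_inj_right:
  assumes "0 < a" "quot_parts a b = quot_parts a b'"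
  shows "b = b'"
proof (rule rat_eqI)
  have nonzero: "rat_num a \<noteq> 0" "rat_den a \<noteq> 0"
    using assms(1) rat_den_pos[of a] rat_num_pos_iff[of a] by auto
  have eqs:
    "rat_num a div gcd (rat_num a) (rat_num b) = rat_num a div gcd (rat_num a) (rat_num b')"
    "rat_num b div gcd (rat_num a) (rat_num b) = rat_num b' div gcd (rat_num a) (rat_num b')"
    "rat_den a div gcd (rat_den a) (rat_den b) = rat_den a div gcd (rat_den a) (rat_den b')"
    "rat_den b div gcd (rat_den a) (rat_den b) = rat_den b' div gcd (rat_den a) (rat_den b')"
    using assms(2) by (simp_all add: quot_parts_def Let_def)
  show "rat_num b = rat_num b'"
    by (rule div_gcd_eq_imp_eq[OF nonzero(1) eqs(1,2)])
  show "rat_den b = rat_den b'"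
    by (rule div_gcd_eq_imp_eq[OF nonzero(2) eqs(3,4)])
qed

lemma quot_parts_inj_left:
  assumes "0 < b" "quot_parts a b = quot_parts a' b"
  shows "a = a'"
proof (rule quot_parts_inj_right[OF assms(1)])
  show "quot_parts b a = quot_parts b a'"
    using arg_cong[OF assms(2), of prod.swap] quot_parts_swap[of b a] quot_parts_swap[of b a']
    by simp
qed

lemma fst_quot_parts_mem: "0 < a \<Longrightarrow> fst (quot_parts a b) \<in> divisor_pairs a"
  using rat_den_pos[of a]
  by (simp add: quot_parts_def Let_def divisor_pairs_def div_gcd_mem_pos_divisors
      flip: rat_num_pos_iff)

lemma snd_quot_parts_mem: "0 < b \<Longrightarrow> snd (quot_parts a b) \<in> divisor_pairs b"
  using fst_quot_parts_mem[of b a] by (simp add: quot_parts_swap[of a b])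

lemma rat_num_den_divide:
  assumes "0 < a" "0 < b" "quot_parts a b = ((x1, y1), (x2, y2))"
  shows "rat_num (a / b) = x1 * y2" "rat_den (a / b) = y1 * x2"
proof -
  define g where "g = gcd (rat_num a) (rat_num b)"
  define h where "h = gcd (rat_den a) (rat_den b)"
  have parts: "x1 = rat_num a div g" "x2 = rat_num b div g" "y1 = rat_den a div h" "y2 = rat_den b div h"
    using assms(3) by (simp_all add: quot_parts_def Let_def g_def h_def)
  have pos: "0 < x1" "0 < y1" "0 < x2" "0 < y2"
    using fst_quot_parts_mem[OF assms(1), of b] snd_quot_parts_mem[OF assms(2), of a] assms(3)
    by (auto simp: divisor_pairs_def pos_divisors_def)
  have nums: "rat_num a = x1 * g" "rat_num b = x2 * g" and dens: "rat_den a = y1 * h" "rat_den b = y2 * h"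
    unfolding parts g_def h_def by simp_all
  have "0 < g" "0 < h"
    using assms(1) rat_den_pos[of a] by (simp_all add: g_def h_def flip: rat_num_pos_iff)
  have "coprime x1 x2" "coprime y1 y2"
    unfolding parts g_def h_def using assms(1) rat_den_pos[of a]
    by (simp_all add: div_gcd_coprime flip: rat_num_pos_iff)
  moreover have "coprime x1 y1" "coprime x2 y2"
    using coprime_rat_num_den[of a] coprime_rat_num_den[of b] by (simp_all add: nums dens)
  ultimately have "coprime (x1 * y2) (y1 * x2)"
    by (simp add: ac_simps coprime_commute[of y2])
  moreover have "a / b = of_int (x1 * y2) / of_int (y1 * x2)"
  proof -
    have ab: "a = of_int (x1 * g) / of_int (y1 * h)" "b = of_int (x2 * g) / of_int (y2 * h)"
      unfolding nums[symmetric] dens[symmetric] by (rule rat_num_den)+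
    show ?thesis
      unfolding ab using \<open>0 < g\<close> \<open>0 < h\<close> pos by (simp add: field_simps)
  qed
  moreover have "0 < y1 * x2"
    using pos by simp
  ultimately show "rat_num (a / b) = x1 * y2" "rat_den (a / b) = y1 * x2"
    by (simp_all only: rat_num_den_of_coprime)
qed

lemma card_image_quot_parts_le:
  assumes "finite A" "finite B" "\<forall>a\<in>A \<union> B. 0 < a"
    and "\<forall>r\<in>set_quot A B. card (divisor_pairs r) \<le> D"
  shows "card (case_prod quot_parts ` (A \<times> B)) \<le> D * card (set_quot A B)"
proof -
  let ?R = "set_quot A B"
  define from_quot :: "rat \<times> int \<times> int \<Rightarrow> (int \<times> int) \<times> (int \<times> int)" where
    "from_quot = (\<lambda>(r, x, y). ((x, y), (rat_den r div y, rat_num r div x)))"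
  have pos_R: "0 < r" if "r \<in> ?R" for r
    using that assms(3) by (auto simp: set_quot_def)
  have "quot_parts a b \<in> from_quot ` (SIGMA r:?R. divisor_pairs r)" if ab: "a \<in> A" "b \<in> B" for a b
  proof -
    obtain x1 y1 x2 y2 where parts: "quot_parts a b = ((x1, y1), (x2, y2))"
      by (metis prod.exhaust)
    have pos: "0 < a" "0 < b"
      using ab assms(3) by auto
    have quot: "rat_num (a / b) = x1 * y2" "rat_den (a / b) = y1 * x2"
      using rat_num_den_divide[OF pos parts] by simp_all
    have "(x1, y1) \<in> divisor_pairs a"
      using fst_quot_parts_mem[OF pos(1), of b] parts by simp
    then have "(x1, y1) \<in> divisor_pairs (a / b)"
      by (simp add: divisor_pairs_def pos_divisors_def quot)
    moreover have "a / b \<in> ?R"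
      using ab by (auto simp: set_quot_def)
    moreover have "quot_parts a b = from_quot (a / b, x1, y1)"
      using \<open>(x1, y1) \<in> divisor_pairs a\<close>
      by (simp add: parts from_quot_def quot divisor_pairs_def pos_divisors_def)
    ultimately show ?thesis
      by blast
  qed
  then have "case_prod quot_parts ` (A \<times> B) \<subseteq> from_quot ` (SIGMA r:?R. divisor_pairs r)"
    by auto
  moreover have "finite (SIGMA r:?R. divisor_pairs r)"
    using assms(1,2) pos_R by (simp add: finite_set_quot finite_divisor_pairs)
  ultimately have "card (case_prod quot_parts ` (A \<times> B)) \<le> card (SIGMA r:?R. divisor_pairs r)"
    by (meson card_image_le card_mono finite_imageI order_trans)
  also have "\<dots> = (\<Sum>r\<in>?R. card (divisor_pairs r))"
    using assms(1,2) pos_R by (simp add: finite_set_quot finite_divisor_pairs)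
  also have "\<dots> \<le> D * card ?R"
    using assms(4) sum_bounded_above[of ?R "\<lambda>r. card (divisor_pairs r)" D] by (simp add: mult.commute)
  finally show ?thesis .
qed

lemma card_quot_parts_fibre_le:
  assumes "finite A" "finite B" "\<forall>a\<in>A \<union> B. 0 < a"
  shows "card {z\<in>A \<times> B. case_prod quot_parts z = s} \<le> card {a\<in>A. fst s \<in> divisor_pairs a}"
    and "card {z\<in>A \<times> B. case_prod quot_parts z = s} \<le> card {b\<in>B. snd s \<in> divisor_pairs b}"
proof -
  let ?F = "{z\<in>A \<times> B. case_prod quot_parts z = s}"
  have inj: "inj_on fst ?F" "inj_on snd ?F"
    using assms(3) by (auto intro!: inj_onI intro: quot_parts_inj_right quot_parts_inj_left)
  have sub: "fst ` ?F \<subseteq> {a\<in>A. fst s \<in> divisor_pairs a}"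
    "snd ` ?F \<subseteq> {b\<in>B. snd s \<in> divisor_pairs b}"
    using assms(3) fst_quot_parts_mem snd_quot_parts_mem by fastforce+
  show "card ?F \<le> card {a\<in>A. fst s \<in> divisor_pairs a}"
    using card_inj_on_le[OF inj(1) sub(1)] assms(1) by simp
  show "card ?F \<le> card {b\<in>B. snd s \<in> divisor_pairs b}"
    using card_inj_on_le[OF inj(2) sub(2)] assms(2) by simp
qed

lemma image_quot_parts_subset:
  assumes "\<forall>a\<in>A \<union> B. 0 < a"
  shows "case_prod quot_parts ` (A \<times> B) \<subseteq> (\<Union>a\<in>A. divisor_pairs a) \<times> (\<Union>b\<in>B. divisor_pairs b)"
proof (rule image_subsetI)
  fix z assume "z \<in> A \<times> B"
  then obtain a b where ab: "z = (a, b)" "a \<in> A" "b \<in> B"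
    by blast
  then have "quot_parts a b \<in> (\<Union>a\<in>A. divisor_pairs a) \<times> (\<Union>b\<in>B. divisor_pairs b)"
    using assms fst_quot_parts_mem[of a b] snd_quot_parts_mem[of b a]
    unfolding mem_Times_iff by blast
  then show "case_prod quot_parts z \<in> (\<Union>a\<in>A. divisor_pairs a) \<times> (\<Union>b\<in>B. divisor_pairs b)"
    by (simp only: ab case_prod_conv)
qed

lemma sum_card_divisor_pairs_le:
  assumes "finite A" "\<forall>a\<in>A. 0 < a \<and> card (divisor_pairs a) \<le> D"
  shows "(\<Sum>p\<in>(\<Union>a\<in>A. divisor_pairs a). card {a\<in>A. p \<in> divisor_pairs a}) \<le> D * card A"
proof -
  have "(\<Sum>p\<in>(\<Union>a\<in>A. divisor_pairs a). card {a\<in>A. p \<in> divisor_pairs a})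
      = (\<Sum>a\<in>A. card (divisor_pairs a))"
    using assms finite_divisor_pairs by (intro sum_card_incidence) auto
  then show ?thesis
    using assms(2) sum_bounded_above[of A "\<lambda>a. card (divisor_pairs a)" D] by (simp add: mult.commute)
qed

lemma sum_squared_quot_parts_fibres_le:
  assumes "finite A" "finite B" "\<forall>a\<in>A \<union> B. 0 < a \<and> card (divisor_pairs a) \<le> D"
  shows "(\<Sum>s\<in>case_prod quot_parts ` (A \<times> B). card {z\<in>A \<times> B. case_prod quot_parts z = s} ^ 2)
         \<le> (D * card A) * (D * card B)"
proof -
  let ?S = "case_prod quot_parts ` (A \<times> B)"
  let ?PA = "\<Union>a\<in>A. divisor_pairs a" and ?PB = "\<Union>b\<in>B. divisor_pairs b"
  define \<alpha> where "\<alpha> p = card {a\<in>A. p \<in> divisor_pairs a}" for p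
  define \<beta> where "\<beta> p = card {b\<in>B. p \<in> divisor_pairs b}" for p
  have pos: "\<forall>a\<in>A \<union> B. 0 < a"
    using assms(3) by blast
  have "(\<Sum>s\<in>?S. card {z\<in>A \<times> B. case_prod quot_parts z = s} ^ 2) \<le> (\<Sum>s\<in>?S. \<alpha> (fst s) * \<beta> (snd s))"
    unfolding \<alpha>_def \<beta>_def power2_eq_square
    by (intro sum_mono mult_mono card_quot_parts_fibre_le[OF assms(1,2) pos]) simp_all
  also have "\<dots> \<le> (\<Sum>s\<in>?PA \<times> ?PB. \<alpha> (fst s) * \<beta> (snd s))"
    using assms finite_divisor_pairs image_quot_parts_subset[OF pos] by (intro sum_mono2) auto
  also have "\<dots> = (\<Sum>p\<in>?PA. \<alpha> p) * (\<Sum>q\<in>?PB. \<beta> q)"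
    by (simp add: sum_product sum.cartesian_product split_beta)
  also have "\<dots> \<le> (D * card A) * (D * card B)"
    unfolding \<alpha>_def \<beta>_def using assms by (intro mult_mono sum_card_divisor_pairs_le) auto
  finally show ?thesis .
qed

lemma card_mult_card_le_card_set_quot:
  assumes "finite A" "finite B" "\<forall>a\<in>A \<union> B. 0 < a"
    and "\<forall>r\<in>A \<union> B \<union> set_quot A B. card (divisor_pairs r) \<le> D"
  shows "card A * card B \<le> D ^ 3 * card (set_quot A B)"
proof -
  let ?f = "\<lambda>(a, b). quot_parts a b" and ?N = "card A * card B"
  have "?N ^ 2 \<le> card (?f ` (A \<times> B)) * (\<Sum>s\<in>?f ` (A \<times> B). card {z\<in>A \<times> B. ?f z = s} ^ 2)"
    using card_squared_le_card_image_mult_sum_fibres[of "A \<times> B" ?f] assms(1,2)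
    by (simp add: card_cartesian_product)
  also have "\<dots> \<le> (D * card (set_quot A B)) * ((D * card A) * (D * card B))"
    using assms by (intro mult_mono card_image_quot_parts_le sum_squared_quot_parts_fibres_le) auto
  also have "\<dots> = (D ^ 3 * card (set_quot A B)) * ?N"
    by (simp add: power3_eq_cube ac_simps)
  finally have "?N * ?N \<le> (D ^ 3 * card (set_quot A B)) * ?N"
    by (simp add: power2_eq_square)
  then show ?thesis
    by (cases "?N = 0") auto
qed

lemma card_mult_card_farey_le_max_tau:
  assumes "1 \<le> Q" "1 \<le> Q'" "A \<subseteq> farey_quot Q Q'" "B \<subseteq> farey_quot Q Q'"
  shows "card A * card B \<le> max_tau (Q * Q') ^ 6 * card (set_quot A B)"
proof -
  have "farey_quot Q Q' \<subseteq> farey_quot (Q * Q') (Q * Q')"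
    using assms(1,2) by (intro farey_quot_mono) (simp_all add: mult_le_cancel_left1 mult_le_cancel_right1)
  then have "A \<union> B \<union> set_quot A B \<subseteq> farey_quot (Q * Q') (Q * Q')"
    using assms(3,4) divide_mem_farey_quot by (fastforce simp: set_quot_def)
  then have "\<forall>r\<in>A \<union> B \<union> set_quot A B. 0 < r \<and> card (divisor_pairs r) \<le> max_tau (Q * Q') ^ 2"
    using farey_quot_rat_num_den_le(1) card_divisor_pairs_le_max_tau
    by (fastforce simp flip: rat_num_pos_iff)
  moreover have "finite A" "finite B"
    using assms(3,4) finite_farey_quot by (auto intro: finite_subset)
  ultimately show ?thesis
    using card_mult_card_le_card_set_quot[of A B "max_tau (Q * Q') ^ 2"]
    by (simp add: power_mult[symmetric])
qed

lemma card_mult_card_farey_le: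
  assumes "1 \<le> Q" "1 \<le> Q'" "A \<subseteq> farey_quot Q Q'" "B \<subseteq> farey_quot Q Q'"
  shows "real (card A) * real (card B) \<le> Q * Q' * real (card (set_quot A B))"
proof (cases "B = {}")
  case False
  then obtain b where "b \<in> B"
    by blast
  moreover have "finite A" "finite B"
    using assms(3,4) finite_farey_quot by (auto intro: finite_subset)
  moreover have "b \<noteq> 0"
    using \<open>b \<in> B\<close> assms(4) by (auto simp: farey_quot_def)
  ultimately have "card A \<le> card (set_quot A B)"
    using card_le_card_set_quot by blast
  moreover have "real (card B) \<le> Q * Q'"
    using card_mono[OF finite_farey_quot assms(4)] card_farey_quot_le[OF assms(1,2)] by linarith
  ultimately show ?thesis
    by (subst mult.commute) (intro mult_mono; simp)
qed (use assms(1,2) in simp)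

theorem lemma1:
  fixes Q Q' :: real and n :: nat and A B :: "rat set"
  assumes "Q \<ge> 1" and "Q' \<ge> 1" and "n \<ge> 1"
    and "A \<subseteq> farey_quot Q Q'" and "B \<subseteq> farey_quot Q Q'"
  shows "real (card (set_quot A B)) \<ge>
    real (card A) * real (card B) /
      ((4 * real (max_tau (Q * Q'))) ^ (n + 1) * (Q * Q') powr (1 / real n) * (1 + ln (Q * Q')))"
proof (rule interpolated_divide_le)
  show "1 \<le> Q * Q'"
    using assms(1,2) by (simp add: mult_ge1_I)
  then show "1 \<le> real (max_tau (Q * Q'))"
    using card_pos_divisors_le_max_tau[of 1 "Q * Q'"] card_pos_divisors[of 1]
    by (simp add: num_divisors_def)
  show "real (card A) * real (card B) \<le> real (max_tau (Q * Q')) ^ 6 * real (card (set_quot A B))"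
    using card_mult_card_farey_le_max_tau[OF assms(1,2,4,5)] by (simp flip: of_nat_mult of_nat_power)
  show "real (card A) * real (card B) \<le> Q * Q' * real (card (set_quot A B))"
    using card_mult_card_farey_le[OF assms(1,2,4,5)] .
qed (use assms(3) in simp_all)

end
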